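(* Fix parameters $K,r_S,r_R,d_S,d_R>0$, $\alpha=\beta=1$, $\gamma>1$, $0<\varepsilon\le 0.5$, $D_0>0$, and dose bounds $D_{\min}=0\le D_{\max}\le D_0$ with $\bar D:=\gamma D_{\max}/D_0-1>0$. Fix $s_0,r_0>0$ with $s_0+r_0<1$, set $n_0=s_0+r_0$, and assume that for $D(t)\equiv 0$ one has $S'(0)>0$ and $R'(0)>0$. Consider the optimal control problem of maximizing $T$ over dose functions $D(\cdot)$ with $D_{\min}\le D(t)\le D_{\max}$, subject to $$\frac{\mathrm{d}S}{\mathrm{d}t}=r_S\Big(1-\frac{S+R}{K}\Big)\Big(1-\gamma\frac{D(t)}{D_0}\Big)S-d_SS,\qquad \frac{\mathrm{d}R}{\mathrm{d}t}=r_R\Big(1-\frac{S+R}{K}\Big)R-d_RR,$$ $N=S+R$, $S(0)=s_0K$, $R(0)=r_0K$, $N(T)=(1+\varepsilon)n_0K$ and $N(t)<(1+\varepsilon)n_0K$ for $t\in[0,T)$. Assume this problem has an optimal control that is piecewise constant with finitely many discontinuities, with optimal terminal time $T^*$ and optimal state $(S^*,R^* )$. Then there exists $T_0<T^*$ such that $r_RR^*(t)>\bar D\,r_SS^*(t)$ for every $t\in[T_0,T^*]$.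
   Context: $S,R$ are sensitive and resistant tumor cell burdens under dose $D(t)$; $T$ is the time of progression, when $N$ first reaches $(1+\varepsilon)n_0K$. *)

theory Defs
  imports "HOL-Analysis.Analysis"
begin

definition rhsS :: "real \<Rightarrow> real \<Rightarrow> real \<Rightarrow> real \<Rightarrow> real \<Rightarrow> real \<Rightarrow> real \<Rightarrow> real \<Rightarrow> real" where
  "rhsS K rS dS \<gamma> D0 d s r = rS * (1 - (s + r) / K) * (1 - \<gamma> * d / D0) * s - dS * s"

definition rhsR :: "real \<Rightarrow> real \<Rightarrow> real \<Rightarrow> real \<Rightarrow> real \<Rightarrow> real" where
  "rhsR K rR dR s r = rR * (1 - (s + r) / K) * r - dR * r"

definition admissible ::
  "real \<Rightarrow> real \<Rightarrow> real \<Rightarrow> real \<Rightarrow> real \<Rightarrow> real \<Rightarrow> real \<Rightarrow> real \<Rightarrow> real \<Rightarrow> real \<Rightarrow> real \<Rightarrow> real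
   \<Rightarrow> (real \<Rightarrow> real) \<Rightarrow> (real \<Rightarrow> real) \<Rightarrow> (real \<Rightarrow> real) \<Rightarrow> real \<Rightarrow> bool" where
  "admissible K rS rR dS dR \<gamma> \<epsilon> D0 Dmin Dmax s0 r0 D S R T \<longleftrightarrow>
     0 \<le> T \<and>
     (\<forall>t\<in>{0..T}. Dmin \<le> D t \<and> D t \<le> Dmax) \<and>
     continuous_on {0..T} S \<and> continuous_on {0..T} R \<and>
     (\<forall>t\<in>{0..T}.
        ((\<lambda>\<tau>. rhsS K rS dS \<gamma> D0 (D \<tau>) (S \<tau>) (R \<tau>)) has_integral (S t - s0 * K)) {0..t} \<and>
        ((\<lambda>\<tau>. rhsR K rR dR (S \<tau>) (R \<tau>)) has_integral (R t - r0 * K)) {0..t}) \<and>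
     S T + R T = (1 + \<epsilon>) * (s0 + r0) * K \<and>
     (\<forall>t\<in>{0..<T}. S t + R t < (1 + \<epsilon>) * (s0 + r0) * K)"

definition piecewise_constant_on :: "real \<Rightarrow> (real \<Rightarrow> real) \<Rightarrow> bool" where
  "piecewise_constant_on T D \<longleftrightarrow>
     (\<exists>F. finite F \<and> (\<forall>x y. 0 \<le> x \<and> x \<le> y \<and> y \<le> T \<and> {x..y} \<inter> F = {} \<longrightarrow> D x = D y))"

end

theory Submission
  imports Defs
begin

text \<open>Let \<open>T\<close> be the optimal progression time. If \<open>rR R > (\<gamma> Dmax / D0 - 1) rS S\<close> at \<open>T\<close>,
  continuity gives the claim. Otherwise the maximal dose makes \<open>N = S + R\<close> decrease at \<open>T\<close>,
  while without drug \<open>N\<close> does not decrease there, since it reaches the threshold \<open>\<Theta>\<close> from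
  below. On a level set of \<open>N\<close> both rates are affine in \<open>R\<close>, so a dose in \<open>[0, Dmax]\<close> can
  hold \<open>N\<close> constant for a fixed time \<open>\<tau>\<close>; after that hold the undrugged growth of \<open>N\<close> is
  strictly positive, and \<open>N\<close> can be driven linearly up to \<open>\<Theta>\<close>. By continuity, uniformly along
  the final ramp, this manoeuvre is admissible when started close enough to \<open>T\<close>, and it reaches
  \<open>\<Theta>\<close> later than \<open>T\<close>, contradicting optimality. Positivity after the hold needs \<open>\<Theta>\<close> not
  to be an equilibrium level of undrugged growth; if it were, a backward Gronwall argument would
  show that \<open>N\<close> cannot reach it in finite time.

  The competing controls are arbitrary admissible ones, over which the optimum is taken.\<close>

lemma eventually_at_left_pos_on_strip:
  fixes h :: "real \<times> 'a::metric_space \<Rightarrow> real"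
  assumes ab: "a < b" and C: "compact C" and cont: "continuous_on ({a..b} \<times> C) h"
    and pos: "\<And>s. s \<in> C \<Longrightarrow> 0 < h (b, s)"
  shows "\<forall>\<^sub>F t in at_left b. \<forall>s\<in>C. 0 < h (t, s)"
proof (cases "C = {}")
  case False
  have "continuous_on C (\<lambda>s. h (b, s))"
    by (rule continuous_on_compose2[OF cont]) (use ab in \<open>auto intro!: continuous_intros\<close>)
  then obtain s0 where s0: "s0 \<in> C" "\<And>s. s \<in> C \<Longrightarrow> h (b, s0) \<le> h (b, s)"
    using continuous_attains_inf[OF C False] by blast
  define m where "m = h (b, s0)"
  have "0 < m" using pos s0 by (simp add: m_def)
  moreover have "uniformly_continuous_on ({a..b} \<times> C) h"
    using cont C by (simp add: compact_uniformly_continuous compact_Times)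
  ultimately obtain d where "0 < d" and d: "\<And>x x'. x \<in> {a..b} \<times> C \<Longrightarrow> x' \<in> {a..b} \<times> C \<Longrightarrow>
      dist x' x < d \<Longrightarrow> dist (h x') (h x) < m"
    unfolding uniformly_continuous_on_def by metis
  have "\<forall>\<^sub>F t in at_left b. max a (b - d) < t \<and> t < b"
    using ab \<open>0 < d\<close> by (auto simp: eventually_at_left_field intro!: exI[of _ "max a (b - d)"])
  then show ?thesis
  proof (rule eventually_mono, intro ballI)
    fix t s assume t: "max a (b - d) < t \<and> t < b" and s: "s \<in> C"
    have "dist (h (t, s)) (h (b, s)) < m"
      using d[of "(b, s)" "(t, s)"] t s ab by (auto simp: dist_Pair_Pair dist_real_def)
    then show "0 < h (t, s)" using s0(2)[OF s] by (auto simp: m_def dist_real_def)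
  qed
qed simp

lemma continuous_on_pos_on_left_interval:
  fixes f :: "real \<Rightarrow> real"
  assumes ab: "a < b" and cont: "continuous_on {a..b} f" and pos: "0 < f b"
  obtains c where "a \<le> c" "c < b" "\<And>t. t \<in> {c..b} \<Longrightarrow> 0 < f t"
proof -
  have "\<forall>\<^sub>F t in at_left b. 0 < f t"
    using order_tendstoD(1)[OF continuous_on_Icc_at_leftD[OF cont ab] pos] .
  then obtain b' where "b' < b" and b': "\<And>t. b' < t \<Longrightarrow> t < b \<Longrightarrow> 0 < f t"
    by (auto simp: eventually_at_left_field)
  show thesis
  proof (rule that[of "max a ((b' + b) / 2)"])
    fix t assume "t \<in> {max a ((b' + b) / 2)..b}"
    then show "0 < f t" using b' pos \<open>b' < b\<close> by (cases "t = b") auto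
  qed (use ab \<open>b' < b\<close> in auto)
qed

lemma first_hitting_time:
  fixes X :: "real \<Rightarrow> real"
  assumes cont: "continuous_on {a..b} X" and start: "X a < c" and t: "t \<in> {a..b}" "c \<le> X t"
  obtains t0 where "a < t0" "t0 \<le> t" "X t0 = c" "\<And>s. s \<in> {a..<t0} \<Longrightarrow> X s < c"
proof -
  have cont_t: "continuous_on {a..t} X" using cont t by (auto elim: continuous_on_subset)
  define Z where "Z = {s \<in> {a..t}. X s = c}"
  have "Z \<noteq> {}" using IVT'[of X a c t, OF _ _ _ cont_t] start t by (auto simp: Z_def)
  moreover have "compact Z"
  proof -
    have "closed Z" unfolding Z_def by (rule continuous_closed_preimage_constant[OF cont_t]) simp
    moreover have "bounded Z" by (rule bounded_subset[of "{a..t}"]) (auto simp: Z_def)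
    ultimately show ?thesis using compact_eq_bounded_closed by blast
  qed
  ultimately obtain t0 where t0: "t0 \<in> Z" "\<And>s. s \<in> Z \<Longrightarrow> t0 \<le> s"
    using compact_attains_inf[of Z] by auto
  have below: "X s < c" if s: "s \<in> {a..<t0}" for s
  proof (rule ccontr)
    assume "\<not> X s < c"
    moreover have "continuous_on {a..s} X"
      by (rule continuous_on_subset[OF cont_t]) (use s t0 in \<open>auto simp: Z_def\<close>)
    ultimately obtain x where "a \<le> x" "x \<le> s" "X x = c"
      using IVT'[of X a c s] start s by auto
    then have "x \<in> Z" using s t0 by (auto simp: Z_def)
    then show False using t0(2)[of x] s \<open>x \<le> s\<close> by auto
  qed
  have "a < t0" using t0 start by (cases "t0 = a") (auto simp: Z_def)
  then show thesis using that below t0 by (auto simp: Z_def)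
qed

lemma has_integral_between:
  fixes f F :: "real \<Rightarrow> real"
  assumes int_b: "(f has_integral F b - F a) {a..b}" and int_c: "(f has_integral F c - F a) {a..c}"
    and "a \<le> b" "b \<le> c"
  shows "(f has_integral F c - F b) {b..c}"
proof -
  have "f integrable_on {a..c}" using int_c by (rule has_integral_integrable)
  then have "f integrable_on {b..c}" "integral {a..b} f + integral {b..c} f = integral {a..c} f"
    using assms by (auto intro: integrable_subinterval_real Henstock_Kurzweil_Integration.integral_combine)
  moreover have "integral {a..b} f = F b - F a" "integral {a..c} f = F c - F a"
    using int_b int_c by (auto intro: integral_unique)
  ultimately have "integral {b..c} f = F c - F b" by linarith
  with \<open>f integrable_on {b..c}\<close> show ?thesis by (metis has_integral_integrable_integral)
qed

lemma has_integral_glue: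
  fixes f g X Y :: "real \<Rightarrow> real"
  assumes "a \<le> b" and t: "t \<in> {a..c}" and "X b = Y b"
    and int_f: "\<And>t. t \<in> {a..b} \<Longrightarrow> (f has_integral X t - X a) {a..t}"
    and int_g: "\<And>t. t \<in> {b..c} \<Longrightarrow> (g has_integral Y t - Y b) {b..t}"
  shows "((\<lambda>\<tau>. if \<tau> \<le> b then f \<tau> else g \<tau>) has_integral (if t \<le> b then X t else Y t) - X a) {a..t}"
proof (cases "t \<le> b")
  case True
  have "(f has_integral X t - X a) {a..t}" using int_f t True by simp
  then have "((\<lambda>\<tau>. if \<tau> \<le> b then f \<tau> else g \<tau>) has_integral X t - X a) {a..t}"
    by (rule has_integral_spike_finite[OF finite.emptyI, rotated]) (use True in auto)
  then show ?thesis using True by simp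
next
  case False
  have "(f has_integral X b - X a) {a..b}" using int_f \<open>a \<le> b\<close> by simp
  then have "((\<lambda>\<tau>. if \<tau> \<le> b then f \<tau> else g \<tau>) has_integral X b - X a) {a..b}"
    by (rule has_integral_spike_finite[OF finite.emptyI, rotated]) auto
  moreover have "(g has_integral Y t - Y b) {b..t}" using int_g t False by simp
  then have "((\<lambda>\<tau>. if \<tau> \<le> b then f \<tau> else g \<tau>) has_integral Y t - Y b) {b..t}"
    by (rule has_integral_spike_finite[OF finite.insertI[OF finite.emptyI], rotated]) auto
  ultimately have "((\<lambda>\<tau>. if \<tau> \<le> b then f \<tau> else g \<tau>) has_integral (X b - X a) + (Y t - Y b)) {a..t}"
    using False \<open>a \<le> b\<close> by (intro has_integral_combine) auto
  then show ?thesis using False \<open>X b = Y b\<close> by simp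
qed

lemma backward_gronwall_zero:
  fixes u :: "real \<Rightarrow> real"
  assumes cont: "continuous_on {a..b} u" and nonneg: "\<And>t. t \<in> {a..b} \<Longrightarrow> 0 \<le> u t"
    and "0 \<le> M" and le: "\<And>t. t \<in> {a..b} \<Longrightarrow> u t \<le> M * integral {t..b} u"
    and t: "t \<in> {a..b}"
  shows "u t = 0"
proof -
  define w where "w s = integral {a..b} u - integral {a..s} u" for s
  have int: "u integrable_on {a..b}" using cont integrable_continuous_real by blast
  have w_eq: "w s = integral {s..b} u" if "s \<in> {a..b}" for s
    using Henstock_Kurzweil_Integration.integral_combine[OF _ _ int, of s] that by (auto simp: w_def)
  have w_nonneg: "0 \<le> w s" if "s \<in> {a..b}" for s
    unfolding w_eq[OF that] using that nonneg integrable_subinterval_real[OF int]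
    by (intro integral_nonneg) auto
  \<comment> \<open>\<open>w(s) e^{Ms}\<close> is nondecreasing and vanishes at \<open>b\<close>.\<close>
  define v where "v s = w s * exp (M * s)" for s
  have dv: "(v has_real_derivative (M * w s - u s) * exp (M * s)) (at s within {a..b})"
    if "s \<in> {a..b}" for s
  proof -
    have "(w has_real_derivative - u s) (at s within {a..b})"
      unfolding w_def using integral_has_real_derivative[OF cont that]
      by (auto intro!: derivative_eq_intros)
    then show ?thesis unfolding v_def by (auto intro!: derivative_eq_intros simp: algebra_simps)
  qed
  have "v t \<le> v b"
  proof (rule DERIV_nonneg_imp_increasing_open[of t b v])
    show "continuous_on {t..b} v"
      using dv t by (meson DERIV_continuous atLeastAtMost_iff continuous_on_eq_continuous_within
          continuous_on_subset order.trans subsetI)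
    fix x assume x: "t < x" "x < b"
    then have "x \<in> interior {a..b}" using t by auto
    then have "(v has_real_derivative (M * w x - u x) * exp (M * x)) (at x)"
      using dv[of x] x t at_within_interior by fastforce
    moreover have "0 \<le> (M * w x - u x) * exp (M * x)"
      using le[of x] x t by (simp add: w_eq)
    ultimately show "\<exists>y. (v has_real_derivative y) (at x) \<and> 0 \<le> y" by blast
  qed (use t in auto)
  then have "w t \<le> 0" by (simp add: v_def w_def mult_le_0_iff)
  then have "integral {t..b} u = 0" using w_nonneg[OF t] w_eq[OF t] by simp
  then show "u t = 0" using le[OF t] nonneg[OF t] by simp
qed

lemma integral_solution_pos:
  fixes X f :: "real \<Rightarrow> real"
  assumes cont: "continuous_on {a..b} X" and start: "0 < X a"
    and int: "\<And>t. t \<in> {a..b} \<Longrightarrow> (f has_integral X t - X a) {a..t}"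
    and lower: "\<And>t. t \<in> {a..b} \<Longrightarrow> 0 \<le> X t \<Longrightarrow> m * X t \<le> f t"
    and t: "t \<in> {a..b}"
  shows "0 < X t"
proof (rule ccontr)
  assume "\<not> 0 < X t"
  moreover have "continuous_on {a..b} (\<lambda>s. - X s)" using cont by (intro continuous_intros)
  ultimately obtain t0 where t0: "a < t0" "t0 \<le> t" "X t0 = 0" "\<And>s. s \<in> {a..<t0} \<Longrightarrow> 0 < X s"
    using first_hitting_time[of a b "\<lambda>s. - X s" 0 t] start t by auto
  have sub: "{a..t0} \<subseteq> {a..b}" using t0 t by auto
  have nonneg: "0 \<le> X s" if "s \<in> {a..t0}" for s
    using t0 that by (cases "s = t0") (auto intro: less_imp_le)
  have "X s = 0" if s: "s \<in> {a..t0}" for s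
  proof (rule backward_gronwall_zero[OF continuous_on_subset[OF cont sub] nonneg _ _ s])
    fix s assume s: "s \<in> {a..t0}"
    have "X integrable_on {s..t0}"
      using s by (intro integrable_continuous_real continuous_on_subset[OF cont]) (use sub in auto)
    then have "((\<lambda>\<tau>. m * X \<tau>) has_integral m * integral {s..t0} X) {s..t0}"
      by (intro has_integral_mult_right integrable_integral)
    moreover have "(f has_integral X t0 - X s) {s..t0}"
      by (rule has_integral_between[where F = X and a = a]) (use s sub int in auto)
    ultimately have "m * integral {s..t0} X \<le> X t0 - X s"
      by (rule has_integral_le) (use s sub nonneg lower in auto)
    moreover have "0 \<le> integral {s..t0} X"
      using \<open>X integrable_on {s..t0}\<close> s nonneg by (intro integral_nonneg) auto
    moreover have "- m * integral {s..t0} X \<le> \<bar>m\<bar> * integral {s..t0} X"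
      using calculation(2) by (intro mult_right_mono) auto
    ultimately show "X s \<le> \<bar>m\<bar> * integral {s..t0} X"
      using t0(3) by simp
  qed auto
  then show False using start t0 by auto
qed

lemma affine_between_endpoints:
  fixes \<alpha> \<beta> p q r :: real
  assumes "min p q \<le> r" "r \<le> max p q"
  shows "\<alpha> + \<beta> * r \<le> max (\<alpha> + \<beta> * p) (\<alpha> + \<beta> * q)"
    and "min (\<alpha> + \<beta> * p) (\<alpha> + \<beta> * q) \<le> \<alpha> + \<beta> * r"
proof -
  have "\<beta> * r \<le> max (\<beta> * p) (\<beta> * q) \<and> min (\<beta> * p) (\<beta> * q) \<le> \<beta> * r"
  proof (cases "0 \<le> \<beta>")
    case True
    then have "\<beta> * min p q \<le> \<beta> * r" "\<beta> * r \<le> \<beta> * max p q"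
      using assms by (simp_all add: mult_left_mono)
    then show ?thesis using True by (simp add: min_mult_distrib_left max_mult_distrib_left)
  next
    case False
    then have "\<beta> * r \<le> \<beta> * min p q" "\<beta> * max p q \<le> \<beta> * r"
      using assms by (simp_all add: mult_left_mono_neg)
    then show ?thesis using False by (simp add: min_mult_distrib_left max_mult_distrib_left)
  qed
  then show "\<alpha> + \<beta> * r \<le> max (\<alpha> + \<beta> * p) (\<alpha> + \<beta> * q)"
    and "min (\<alpha> + \<beta> * p) (\<alpha> + \<beta> * q) \<le> \<alpha> + \<beta> * r"
    by auto
qed

locale tumour_model =
  fixes K rS rR dS dR \<gamma> \<epsilon> D0 Dmax s0 r0 :: real
  assumes K_pos: "0 < K" and rS_pos: "0 < rS" and rR_pos: "0 < rR"
    and dS_pos: "0 < dS" and dR_pos: "0 < dR" and \<gamma>_pos: "0 < \<gamma>" and D0_pos: "0 < D0"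
    and \<epsilon>_pos: "0 < \<epsilon>" and s0_pos: "0 < s0" and r0_pos: "0 < r0" and n0_less_1: "s0 + r0 < 1"
begin

abbreviation fS :: "real \<Rightarrow> real \<Rightarrow> real \<Rightarrow> real" where "fS \<equiv> rhsS K rS dS \<gamma> D0"
abbreviation fR :: "real \<Rightarrow> real \<Rightarrow> real" where "fR \<equiv> rhsR K rR dR"
abbreviation \<Theta> :: real where "\<Theta> \<equiv> (1 + \<epsilon>) * (s0 + r0) * K"
abbreviation feasible where "feasible \<equiv> admissible K rS rR dS dR \<gamma> \<epsilon> D0 0 Dmax s0 r0"

definition per_capita_S :: "real \<Rightarrow> real \<Rightarrow> real" where
  "per_capita_S D n = rS * (1 - n / K) * (1 - \<gamma> * D / D0) - dS"

definition per_capita_R :: "real \<Rightarrow> real" where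
  "per_capita_R n = rR * (1 - n / K) - dR"

definition N_rate :: "real \<Rightarrow> real \<Rightarrow> real \<Rightarrow> real" where
  "N_rate D s r = fS D s r + fR s r"

lemma fS_eq: "fS D s r = per_capita_S D (s + r) * s"
  by (simp add: rhsS_def per_capita_S_def algebra_simps)

lemma fR_eq: "fR s r = per_capita_R (s + r) * r"
  by (simp add: rhsR_def per_capita_R_def algebra_simps)

lemma N_rate_eq: "N_rate D s r = per_capita_S D (s + r) * s + per_capita_R (s + r) * r"
  by (simp add: N_rate_def rhsS_def rhsR_def per_capita_S_def per_capita_R_def algebra_simps)

lemma N_rate_on_level: "N_rate D (L - r) r = per_capita_S D L * (L - r) + per_capita_R L * r"
  by (simp add: N_rate_eq)

lemma N_rate_nodrug_near_equilibrium:
  assumes "per_capita_R n = 0" "per_capita_S 0 n = 0"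
  shows "N_rate 0 s r = (rS * s + rR * r) / K * (n - (s + r))"
proof -
  have dR: "dR = rR * (1 - n / K)" and dS: "dS = rS * (1 - n / K)"
    using assms by (simp_all add: per_capita_R_def per_capita_S_def)
  show ?thesis
    unfolding N_rate_eq per_capita_S_def per_capita_R_def unfolding dR dS
    using K_pos by (simp add: field_simps)
qed

lemma N_rate_at_K: "s + r = K \<Longrightarrow> N_rate D s r = - dS * s - dR * r"
  using K_pos by (simp add: N_rate_eq per_capita_S_def per_capita_R_def)

lemma per_capita_S_affine:
  "per_capita_S D n = (rS * (1 - n / K) - dS) + (- \<gamma> * rS * (1 - n / K) / D0) * D"
  using D0_pos K_pos by (simp add: per_capita_S_def field_simps)

lemma N_rate_affine:
  "N_rate D s r = N_rate 0 s r + (- \<gamma> * rS * (1 - (s + r) / K) * s / D0) * D"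
  using D0_pos K_pos by (simp add: N_rate_def rhsS_def field_simps)

lemma per_capita_S_ge_min:
  assumes "0 \<le> D" "D \<le> Dmax"
  shows "min (per_capita_S 0 n) (per_capita_S Dmax n) \<le> per_capita_S D n"
  using affine_between_endpoints(2)[where p = 0 and q = Dmax and r = D and
      \<alpha> = "rS * (1 - n / K) - dS" and \<beta> = "- \<gamma> * rS * (1 - n / K) / D0"] assms
  unfolding per_capita_S_affine[of D] per_capita_S_affine[of Dmax] per_capita_S_affine[of 0] by simp

lemma N_rate_le_max:
  assumes "0 \<le> D" "D \<le> Dmax"
  shows "N_rate D s r \<le> max (N_rate 0 s r) (N_rate Dmax s r)"
  using affine_between_endpoints(1)[where p = 0 and q = Dmax and r = D and
      \<alpha> = "N_rate 0 s r" and \<beta> = "- \<gamma> * rS * (1 - (s + r) / K) * s / D0"] assms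
  by (simp add: N_rate_affine[of D] N_rate_affine[of Dmax])

lemma N_rate_le_nodrug:
  assumes "0 \<le> D" "0 \<le> s" "s + r \<le> K"
  shows "N_rate D s r \<le> N_rate 0 s r"
proof -
  have "0 \<le> 1 - (s + r) / K" using assms K_pos by (simp add: field_simps)
  then have "0 \<le> \<gamma> * rS * (1 - (s + r) / K) * s / D0 * D"
    using assms \<gamma>_pos rS_pos D0_pos by simp
  then show ?thesis by (subst N_rate_affine) simp
qed

definition dose_for :: "real \<Rightarrow> real \<Rightarrow> real \<Rightarrow> real" where
  "dose_for s r v = D0 * (N_rate 0 s r - v) / (\<gamma> * rS * (1 - (s + r) / K) * s)"

lemma dose_for:
  assumes "0 < s" "s + r < K" and lower: "N_rate Dmax s r \<le> v" and upper: "v \<le> N_rate 0 s r"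
  shows "0 \<le> dose_for s r v" "dose_for s r v \<le> Dmax" "N_rate (dose_for s r v) s r = v"
proof -
  define \<kappa> where "\<kappa> = \<gamma> * rS * (1 - (s + r) / K) * s / D0"
  have "0 < 1 - (s + r) / K" using assms K_pos by (simp add: field_simps)
  then have "0 < \<kappa>" using assms \<gamma>_pos rS_pos D0_pos by (simp add: \<kappa>_def)
  have dose: "dose_for s r v = (N_rate 0 s r - v) / \<kappa>"
    using D0_pos by (simp add: dose_for_def \<kappa>_def field_simps)
  have rate: "N_rate D s r = N_rate 0 s r - D * \<kappa>" for D
    by (simp add: N_rate_affine[of D] \<kappa>_def)
  show "0 \<le> dose_for s r v" using upper \<open>0 < \<kappa>\<close> by (simp add: dose)
  show "dose_for s r v \<le> Dmax"
    using lower \<open>0 < \<kappa>\<close> by (simp add: dose rate[of Dmax] pos_divide_le_eq)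
  show "N_rate (dose_for s r v) s r = v"
    using rate[of "dose_for s r v"] \<open>0 < \<kappa>\<close> by (simp add: dose)
qed

definition solution_on ::
  "(real \<Rightarrow> real) \<Rightarrow> (real \<Rightarrow> real) \<Rightarrow> (real \<Rightarrow> real) \<Rightarrow> real \<Rightarrow> real \<Rightarrow> bool" where
  "solution_on D S R a b \<longleftrightarrow>
     continuous_on {a..b} S \<and> continuous_on {a..b} R \<and> (\<forall>t\<in>{a..b}. 0 \<le> D t \<and> D t \<le> Dmax) \<and>
     (\<forall>t\<in>{a..b}. ((\<lambda>\<tau>. fS (D \<tau>) (S \<tau>) (R \<tau>)) has_integral S t - S a) {a..t} \<and>
                 ((\<lambda>\<tau>. fR (S \<tau>) (R \<tau>)) has_integral R t - R a) {a..t})"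

lemma feasible_iff:
  "feasible D S R T \<longleftrightarrow> 0 \<le> T \<and> solution_on D S R 0 T \<and> S 0 = s0 * K \<and> R 0 = r0 * K \<and>
     S T + R T = \<Theta> \<and> (\<forall>t\<in>{0..<T}. S t + R t < \<Theta>)"
proof
  assume adm: "feasible D S R T"
  then have "0 \<le> T" by (simp add: admissible_def)
  have null: "(f has_integral 0) {0..0::real}" for f :: "real \<Rightarrow> real"
    by (rule has_integral_null_real) simp
  have "\<forall>t\<in>{0..T}. ((\<lambda>\<tau>. fS (D \<tau>) (S \<tau>) (R \<tau>)) has_integral S t - s0 * K) {0..t} \<and>
      ((\<lambda>\<tau>. fR (S \<tau>) (R \<tau>)) has_integral R t - r0 * K) {0..t}"
    using adm unfolding admissible_def by blast
  then have "S 0 - s0 * K = 0 \<and> R 0 - r0 * K = 0"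
    using \<open>0 \<le> T\<close> has_integral_unique[OF _ null] by (meson atLeastAtMost_iff order_refl)
  then have "S 0 = s0 * K" "R 0 = r0 * K" by simp_all
  with adm show "0 \<le> T \<and> solution_on D S R 0 T \<and> S 0 = s0 * K \<and> R 0 = r0 * K \<and>
     S T + R T = \<Theta> \<and> (\<forall>t\<in>{0..<T}. S t + R t < \<Theta>)"
    unfolding admissible_def solution_on_def by simp
qed (auto simp: admissible_def solution_on_def)

lemma solution_on_restrict: "solution_on D S R a c \<Longrightarrow> b \<le> c \<Longrightarrow> solution_on D S R a b"
  unfolding solution_on_def by (auto elim: continuous_on_subset)

lemma solution_on_glue:
  assumes sol1: "solution_on D1 S1 R1 a b" and sol2: "solution_on D2 S2 R2 b c"
    and S_eq: "S1 b = S2 b" and R_eq: "R1 b = R2 b" and "a \<le> b" "b \<le> c"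
  shows "solution_on (\<lambda>t. if t \<le> b then D1 t else D2 t) (\<lambda>t. if t \<le> b then S1 t else S2 t)
           (\<lambda>t. if t \<le> b then R1 t else R2 t) a c"
proof -
  let ?D = "\<lambda>t. if t \<le> b then D1 t else D2 t"
  let ?S = "\<lambda>t. if t \<le> b then S1 t else S2 t"
  let ?R = "\<lambda>t. if t \<le> b then R1 t else R2 t"
  have glue_cont: "continuous_on {a..c} (\<lambda>t. if t \<le> b then F1 t else F2 t)"
    if "continuous_on {a..b} F1" "continuous_on {b..c} F2" "F1 b = F2 b" for F1 F2 :: "real \<Rightarrow> real"
  proof -
    have "continuous_on {a..b} (\<lambda>t. if t \<le> b then F1 t else F2 t)"
      using that(1) by (rule continuous_on_eq) auto
    moreover have "continuous_on {b..c} (\<lambda>t. if t \<le> b then F1 t else F2 t)"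
      using that(2) by (rule continuous_on_eq) (use that(3) in auto)
    ultimately have "continuous_on ({a..b} \<union> {b..c}) (\<lambda>t. if t \<le> b then F1 t else F2 t)"
      by (intro continuous_on_closed_Un) auto
    moreover have "{a..b} \<union> {b..c} = {a..c}" using assms by auto
    ultimately show ?thesis by simp
  qed
  have "a \<le> b" using assms by simp
  note sols = sol1[unfolded solution_on_def] sol2[unfolded solution_on_def]
  have int_S: "((\<lambda>\<tau>. fS (?D \<tau>) (?S \<tau>) (?R \<tau>)) has_integral ?S t - ?S a) {a..t}"
    and int_R: "((\<lambda>\<tau>. fR (?S \<tau>) (?R \<tau>)) has_integral ?R t - ?R a) {a..t}"
    if t: "t \<in> {a..c}" for t
  proof -
    have "(\<lambda>\<tau>. fS (?D \<tau>) (?S \<tau>) (?R \<tau>)) =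
        (\<lambda>\<tau>. if \<tau> \<le> b then fS (D1 \<tau>) (S1 \<tau>) (R1 \<tau>) else fS (D2 \<tau>) (S2 \<tau>) (R2 \<tau>))"
      "(\<lambda>\<tau>. fR (?S \<tau>) (?R \<tau>)) = (\<lambda>\<tau>. if \<tau> \<le> b then fR (S1 \<tau>) (R1 \<tau>) else fR (S2 \<tau>) (R2 \<tau>))"
      by auto
    then show "((\<lambda>\<tau>. fS (?D \<tau>) (?S \<tau>) (?R \<tau>)) has_integral ?S t - ?S a) {a..t}"
      and "((\<lambda>\<tau>. fR (?S \<tau>) (?R \<tau>)) has_integral ?R t - ?R a) {a..t}"
      using has_integral_glue[where X = S1 and Y = S2, OF \<open>a \<le> b\<close> t S_eq]
        has_integral_glue[where X = R1 and Y = R2, OF \<open>a \<le> b\<close> t R_eq] sols \<open>a \<le> b\<close>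
      by simp_all
  qed
  show ?thesis
    unfolding solution_on_def
  proof (intro conjI ballI int_S int_R)
    show "continuous_on {a..c} ?S" "continuous_on {a..c} ?R"
      using sol1 sol2 by (intro glue_cont S_eq R_eq; simp add: solution_on_def)+
  next
    fix t assume "t \<in> {a..c}"
    then show "0 \<le> ?D t" "?D t \<le> Dmax" using sol1 sol2 unfolding solution_on_def by auto
  qed
qed

lemma N_has_integral:
  assumes sol: "solution_on D S R a b" and "a \<le> s" "s \<le> t" "t \<le> b"
  shows "((\<lambda>\<tau>. N_rate (D \<tau>) (S \<tau>) (R \<tau>)) has_integral (S t + R t) - (S s + R s)) {s..t}"
proof -
  have "s \<in> {a..b}" "t \<in> {a..b}" using assms by auto
  then have "((\<lambda>\<tau>. fS (D \<tau>) (S \<tau>) (R \<tau>)) has_integral S t - S s) {s..t}"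
    "((\<lambda>\<tau>. fR (S \<tau>) (R \<tau>)) has_integral R t - R s) {s..t}"
    using sol assms unfolding solution_on_def by (auto intro: has_integral_between[where a = a])
  then have "((\<lambda>\<tau>. fS (D \<tau>) (S \<tau>) (R \<tau>) + fR (S \<tau>) (R \<tau>)) has_integral
      (S t - S s) + (R t - R s)) {s..t}"
    by (rule has_integral_add)
  then show ?thesis by (simp add: N_rate_def algebra_simps)
qed

lemma solution_pos:
  assumes sol: "solution_on D S R a b" and "0 < S a" "0 < R a" and t: "t \<in> {a..b}"
  shows "0 < S t" "0 < R t"
proof -
  have cS: "continuous_on {a..b} S" and cR: "continuous_on {a..b} R"
    and dose: "\<And>t. t \<in> {a..b} \<Longrightarrow> 0 \<le> D t \<and> D t \<le> Dmax"
    using sol by (simp_all add: solution_on_def)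
  have "compact ((\<lambda>t. min (per_capita_S 0 (S t + R t)) (per_capita_S Dmax (S t + R t))) ` {a..b})"
    unfolding per_capita_S_def using cS cR K_pos D0_pos
    by (intro compact_continuous_image continuous_intros) auto
  then obtain mS
    where mS: "\<forall>t\<in>{a..b}. \<bar>min (per_capita_S 0 (S t + R t)) (per_capita_S Dmax (S t + R t))\<bar> \<le> mS"
    by (auto dest!: compact_imp_bounded simp: bounded_real)
  have "compact ((\<lambda>t. per_capita_R (S t + R t)) ` {a..b})"
    unfolding per_capita_R_def using cS cR K_pos by (intro compact_continuous_image continuous_intros) auto
  then obtain mR where mR: "\<forall>t\<in>{a..b}. \<bar>per_capita_R (S t + R t)\<bar> \<le> mR"
    by (auto dest!: compact_imp_bounded simp: bounded_real)
  show "0 < S t"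
  proof (rule integral_solution_pos[OF cS \<open>0 < S a\<close> _ _ t])
    show "((\<lambda>\<tau>. fS (D \<tau>) (S \<tau>) (R \<tau>)) has_integral S t - S a) {a..t}" if "t \<in> {a..b}" for t
      using sol that by (simp add: solution_on_def)
    fix t assume t: "t \<in> {a..b}" and "0 \<le> S t"
    have "- mS \<le> per_capita_S (D t) (S t + R t)"
      using per_capita_S_ge_min[of "D t" "S t + R t"] dose[OF t] mS[rule_format, OF t] by linarith
    then have "- mS * S t \<le> per_capita_S (D t) (S t + R t) * S t"
      using \<open>0 \<le> S t\<close> by (rule mult_right_mono)
    then show "- mS * S t \<le> fS (D t) (S t) (R t)" by (simp add: fS_eq)
  qed
  show "0 < R t"
  proof (rule integral_solution_pos[OF cR \<open>0 < R a\<close> _ _ t])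
    show "((\<lambda>\<tau>. fR (S \<tau>) (R \<tau>)) has_integral R t - R a) {a..t}" if "t \<in> {a..b}" for t
      using sol that by (simp add: solution_on_def)
    fix t assume t: "t \<in> {a..b}" and "0 \<le> R t"
    have "- mR \<le> per_capita_R (S t + R t)" using mR[rule_format, OF t] by linarith
    then have "- mR * R t \<le> per_capita_R (S t + R t) * R t"
      using \<open>0 \<le> R t\<close> by (rule mult_right_mono)
    then show "- mR * R t \<le> fR (S t) (R t)" by (simp add: fR_eq)
  qed
qed

lemma solution_below_K:
  assumes sol: "solution_on D S R a b" and "0 < S a" "0 < R a" "S a + R a < K" and t: "t \<in> {a..b}"
  shows "S t + R t < K"
proof (rule ccontr)
  assume "\<not> S t + R t < K"
  moreover have cN: "continuous_on {a..b} (\<lambda>t. S t + R t)"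
    using sol by (auto simp: solution_on_def intro!: continuous_intros)
  ultimately obtain tK where tK: "a < tK" "tK \<le> t" "S tK + R tK = K"
    and below: "\<And>s. s \<in> {a..<tK} \<Longrightarrow> S s + R s < K"
    using first_hitting_time[OF cN \<open>S a + R a < K\<close> t] by auto
  have tK_in: "tK \<in> {a..b}" using tK t by auto
  define G where "G s = max (N_rate 0 (S s) (R s)) (N_rate Dmax (S s) (R s))" for s
  \<comment> \<open>At \<open>N = K\<close> growth stops, so \<open>N\<close> decreases whatever the dose.\<close>
  have "0 < dS * S tK + dR * R tK"
    using solution_pos[OF sol \<open>0 < S a\<close> \<open>0 < R a\<close> tK_in] dS_pos dR_pos by (simp add: add_pos_pos)
  then have "G tK < 0" by (simp add: G_def N_rate_at_K[OF tK(3)])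
  moreover have "continuous_on {a..tK} (\<lambda>s. - G s)"
    using sol tK_in K_pos unfolding G_def N_rate_def rhsS_def rhsR_def solution_on_def
    by (auto intro!: continuous_intros elim: continuous_on_subset)
  ultimately obtain c where c: "a \<le> c" "c < tK" and neg: "\<And>s. s \<in> {c..tK} \<Longrightarrow> G s < 0"
    using continuous_on_pos_on_left_interval[OF \<open>a < tK\<close>, of "\<lambda>s. - G s"] by auto
  have "((\<lambda>s. N_rate (D s) (S s) (R s)) has_integral (S tK + R tK) - (S c + R c)) {c..tK}"
    using c tK_in by (intro N_has_integral[OF sol]) auto
  then have "(S tK + R tK) - (S c + R c) \<le> 0"
  proof (rule has_integral_le[OF _ has_integral_0])
    fix s assume s: "s \<in> {c..tK}"
    then have "0 \<le> D s \<and> D s \<le> Dmax" using sol c tK_in by (auto simp: solution_on_def)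
    then have "N_rate (D s) (S s) (R s) \<le> G s"
      unfolding G_def by (intro N_rate_le_max) auto
    then show "N_rate (D s) (S s) (R s) \<le> 0" using neg[OF s] by simp
  qed
  then show False using below[of c] c tK by auto
qed

text \<open>The state \<open>u\<close> time units after \<open>N\<close> starts rising linearly from \<open>L\<close> with slope \<open>\<sigma>\<close> and
  \<open>R = R0\<close>: then \<open>R' = per_capita_R (L + \<sigma> u) R\<close> integrates in closed form. For \<open>\<sigma> = 0\<close> this
  holds \<open>N\<close> at the level \<open>L\<close>.\<close>

definition ramp_R :: "real \<Rightarrow> real \<Rightarrow> real \<Rightarrow> real \<Rightarrow> real" where
  "ramp_R L \<sigma> R0 u = R0 * exp (per_capita_R L * u - rR * \<sigma> * u\<^sup>2 / (2 * K))"

definition ramp_S :: "real \<Rightarrow> real \<Rightarrow> real \<Rightarrow> real \<Rightarrow> real" where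
  "ramp_S L \<sigma> R0 u = L + \<sigma> * u - ramp_R L \<sigma> R0 u"

definition ramp_dose :: "real \<Rightarrow> real \<Rightarrow> real \<Rightarrow> real \<Rightarrow> real" where
  "ramp_dose L \<sigma> R0 u = dose_for (ramp_S L \<sigma> R0 u) (ramp_R L \<sigma> R0 u) \<sigma>"

definition ramp_admissible :: "real \<Rightarrow> real \<Rightarrow> real \<Rightarrow> real \<Rightarrow> bool" where
  "ramp_admissible L \<sigma> R0 u \<longleftrightarrow> 0 < ramp_S L \<sigma> R0 u \<and>
     N_rate Dmax (ramp_S L \<sigma> R0 u) (ramp_R L \<sigma> R0 u) \<le> \<sigma> \<and>
     \<sigma> \<le> N_rate 0 (ramp_S L \<sigma> R0 u) (ramp_R L \<sigma> R0 u)"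

lemma ramp_R_0 [simp]: "ramp_R L \<sigma> R0 0 = R0"
  by (simp add: ramp_R_def)

lemma ramp_S_0 [simp]: "ramp_S L \<sigma> R0 0 = L - R0"
  by (simp add: ramp_S_def)

lemma ramp_N: "ramp_S L \<sigma> R0 u + ramp_R L \<sigma> R0 u = L + \<sigma> * u"
  by (simp add: ramp_S_def)

lemma has_real_derivative_ramp_R:
  "((\<lambda>t. ramp_R L \<sigma> R0 (t - a)) has_real_derivative
     fR (ramp_S L \<sigma> R0 (x - a)) (ramp_R L \<sigma> R0 (x - a))) (at x within A)"
proof -
  have "((\<lambda>t. per_capita_R L * (t - a) - rR * \<sigma> * (t - a)\<^sup>2 / (2 * K)) has_real_derivative
      per_capita_R (L + \<sigma> * (x - a))) (at x within A)"
    using K_pos by (auto intro!: derivative_eq_intros simp: per_capita_R_def field_simps)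
  from DERIV_cmult[OF DERIV_chain2[OF DERIV_exp this], of R0]
  have "((\<lambda>t. ramp_R L \<sigma> R0 (t - a)) has_real_derivative
      per_capita_R (L + \<sigma> * (x - a)) * ramp_R L \<sigma> R0 (x - a)) (at x within A)"
    by (simp add: ramp_R_def mult_ac)
  then show ?thesis by (simp add: fR_eq ramp_N)
qed

lemma ramp_solution:
  assumes "a \<le> b"
    and ramp: "\<And>u. u \<in> {0..b - a} \<Longrightarrow> L + \<sigma> * u < K \<and> ramp_admissible L \<sigma> R0 u"
  shows "solution_on (\<lambda>t. ramp_dose L \<sigma> R0 (t - a)) (\<lambda>t. ramp_S L \<sigma> R0 (t - a))
           (\<lambda>t. ramp_R L \<sigma> R0 (t - a)) a b"
proof -
  let ?S = "\<lambda>t. ramp_S L \<sigma> R0 (t - a)" and ?R = "\<lambda>t. ramp_R L \<sigma> R0 (t - a)"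
    and ?D = "\<lambda>t. ramp_dose L \<sigma> R0 (t - a)"
  have dose: "0 \<le> ?D t" "?D t \<le> Dmax" "N_rate (?D t) (?S t) (?R t) = \<sigma>" if "t \<in> {a..b}" for t
    using ramp[of "t - a"] that unfolding ramp_dose_def ramp_admissible_def
    by (auto intro!: dose_for simp: ramp_S_def)
  have dR: "(?R has_real_derivative fR (?S t) (?R t)) (at t within A)" for t A
    by (rule has_real_derivative_ramp_R)
  have dS: "(?S has_real_derivative fS (?D t) (?S t) (?R t)) (at t within A)" if "t \<in> {a..b}" for t A
  proof -
    have deriv: "(?S has_real_derivative \<sigma> - fR (?S t) (?R t)) (at t within A)"
      using dR[of t A] unfolding ramp_S_def by (auto intro!: derivative_eq_intros)
    have "fS (?D t) (?S t) (?R t) = \<sigma> - fR (?S t) (?R t)"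
      using dose(3)[OF that] by (simp add: N_rate_def)
    then show ?thesis using deriv by simp
  qed
  have ftc: "(f' has_integral F t - F a) {a..t}"
    if "t \<in> {a..b}" "\<And>x. x \<in> {a..b} \<Longrightarrow> (F has_real_derivative f' x) (at x within {a..t})"
    for F f' :: "real \<Rightarrow> real" and t
    using that by (intro fundamental_theorem_of_calculus)
      (auto simp: has_real_derivative_iff_has_vector_derivative[symmetric])
  show ?thesis
    unfolding solution_on_def
  proof (intro conjI ballI)
    show "continuous_on {a..b} ?S" "continuous_on {a..b} ?R"
      unfolding continuous_on_eq_continuous_within using dS dR by (blast intro: DERIV_continuous)+
  next
    fix t assume t: "t \<in> {a..b}"
    show "0 \<le> ?D t" "?D t \<le> Dmax" using dose t by auto
    show "((\<lambda>\<tau>. fS (?D \<tau>) (?S \<tau>) (?R \<tau>)) has_integral ?S t - ?S a) {a..t}"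
      using dS by (intro ftc[where F = ?S, OF t]) auto
    show "((\<lambda>\<tau>. fR (?S \<tau>) (?R \<tau>)) has_integral ?R t - ?R a) {a..t}"
      using dR by (intro ftc[where F = ?R, OF t])
  qed
qed

lemma ramp_R_hold_between:
  assumes "0 < R0" "u \<in> {0..\<tau>}"
  shows "min R0 (ramp_R L 0 R0 \<tau>) \<le> ramp_R L 0 R0 u \<and> ramp_R L 0 R0 u \<le> max R0 (ramp_R L 0 R0 \<tau>)"
proof -
  have "ramp_R L 0 R0 v = R0 * exp (per_capita_R L * v)" for v by (simp add: ramp_R_def)
  moreover have "min 1 (exp (per_capita_R L * \<tau>)) \<le> exp (per_capita_R L * u) \<and>
      exp (per_capita_R L * u) \<le> max 1 (exp (per_capita_R L * \<tau>))"
  proof (cases "0 \<le> per_capita_R L")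
    case True
    then have "0 \<le> per_capita_R L * u" "per_capita_R L * u \<le> per_capita_R L * \<tau>"
      using assms by (simp_all add: mult_left_mono)
    then show ?thesis by auto
  next
    case False
    then have "per_capita_R L * u \<le> 0" "per_capita_R L * \<tau> \<le> per_capita_R L * u"
      using assms by (simp_all add: mult_nonpos_nonneg mult_left_mono_neg)
    then show ?thesis by auto
  qed
  ultimately show ?thesis
    using \<open>0 < R0\<close> by (auto simp: min_def max_def split: if_splits)
qed

lemma hold_solution:
  assumes "0 \<le> \<tau>" "L < K" "0 < R0"
    and ends: "\<And>r. r \<in> {R0, ramp_R L 0 R0 \<tau>} \<Longrightarrow>
       0 < L - r \<and> N_rate Dmax (L - r) r \<le> 0 \<and> 0 \<le> N_rate 0 (L - r) r"
  shows "solution_on (\<lambda>t. ramp_dose L 0 R0 (t - a)) (\<lambda>t. ramp_S L 0 R0 (t - a))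
           (\<lambda>t. ramp_R L 0 R0 (t - a)) a (a + \<tau>)"
proof (rule ramp_solution)
  fix u assume "u \<in> {0..a + \<tau> - a}"
  then have r: "min R0 (ramp_R L 0 R0 \<tau>) \<le> ramp_R L 0 R0 u" "ramp_R L 0 R0 u \<le> max R0 (ramp_R L 0 R0 \<tau>)"
    using ramp_R_hold_between[OF \<open>0 < R0\<close>] by auto
  \<comment> \<open>On the level \<open>N = L\<close> all three constraints are affine in \<open>R\<close>, so they hold between the endpoints.\<close>
  have level: "N_rate D (L - r) r = per_capita_S D L * L + (per_capita_R L - per_capita_S D L) * r" for D r
    by (simp add: N_rate_on_level algebra_simps)
  show "L + 0 * u < K \<and> ramp_admissible L 0 R0 u"
    using affine_between_endpoints(2)[OF r, where \<alpha> = L and \<beta> = "-1"]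
      affine_between_endpoints(1)[OF r,
        where \<alpha> = "per_capita_S Dmax L * L" and \<beta> = "per_capita_R L - per_capita_S Dmax L"]
      affine_between_endpoints(2)[OF r,
        where \<alpha> = "per_capita_S 0 L * L" and \<beta> = "per_capita_R L - per_capita_S 0 L"]
      ends[of R0] ends[of "ramp_R L 0 R0 \<tau>"] \<open>L < K\<close>
    by (simp add: ramp_admissible_def ramp_S_def level min_le_iff_disj le_max_iff_disj) linarith
qed (use \<open>0 \<le> \<tau>\<close> in simp)

lemma hold_duration_exists:
  assumes "0 < R1" "0 < L - R1" and max_dose: "N_rate Dmax (L - R1) R1 < 0"
    and no_drug: "0 \<le> N_rate 0 (L - R1) R1"
    and nondeg: "per_capita_R L \<noteq> 0 \<or> per_capita_S 0 L \<noteq> 0"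
  obtains \<tau> where "0 < \<tau>" "0 < L - ramp_R L 0 R1 \<tau>"
    "N_rate Dmax (L - ramp_R L 0 R1 \<tau>) (ramp_R L 0 R1 \<tau>) < 0"
    "0 < N_rate 0 (L - ramp_R L 0 R1 \<tau>) (ramp_R L 0 R1 \<tau>)"
proof -
  let ?q = "ramp_R L 0 R1"
  define a b where "a = per_capita_R L" and "b = per_capita_S 0 L"
  have q: "?q \<tau> = R1 * exp (a * \<tau>)" for \<tau> by (simp add: ramp_R_def a_def)
  have q_lim: "(?q \<longlongrightarrow> R1) (at_right 0)"
    unfolding q by (auto intro!: tendsto_eq_intros)
  have "\<forall>\<^sub>F \<tau> in at_right 0. 0 < L - ?q \<tau>"
    using \<open>0 < L - R1\<close> by (intro order_tendstoD(1)[OF tendsto_diff[OF tendsto_const q_lim]])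
  moreover have "\<forall>\<^sub>F \<tau> in at_right 0. N_rate Dmax (L - ?q \<tau>) (?q \<tau>) < 0"
    unfolding N_rate_on_level
    by (intro order_tendstoD(2)[OF _ max_dose[unfolded N_rate_on_level]] tendsto_intros q_lim)
  moreover have "\<forall>\<^sub>F \<tau> in at_right 0. 0 < N_rate 0 (L - ?q \<tau>) (?q \<tau>)"
  proof (cases "0 < N_rate 0 (L - R1) R1")
    case True
    then show ?thesis unfolding N_rate_on_level
      by (intro order_tendstoD(1)[OF _ True[unfolded N_rate_on_level]] tendsto_intros q_lim)
  next
    case False
    \<comment> \<open>The undrugged growth vanishes at the start, but changes along the hold at a rate
      proportional to \<open>a\<^sup>2\<close>, which is positive by nondegeneracy.\<close>
    then have zero: "b * (L - R1) + a * R1 = 0"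
      using no_drug by (simp add: N_rate_on_level a_def b_def)
    have "a \<noteq> 0" using zero nondeg \<open>0 < L - R1\<close> by (auto simp: a_def b_def)
    have "0 < N_rate 0 (L - ?q \<tau>) (?q \<tau>)" if "0 < \<tau>" for \<tau>
    proof -
      have pos: "0 < a * (exp (a * \<tau>) - 1)"
      proof (cases "0 < a")
        case False
        with \<open>a \<noteq> 0\<close> have "a < 0" by simp
        with \<open>0 < \<tau>\<close> have "exp (a * \<tau>) < 1" by (simp add: mult_neg_pos)
        with \<open>a < 0\<close> show ?thesis by (simp add: mult_neg_neg)
      qed (use \<open>0 < \<tau>\<close> in simp)
      have b_eq: "b = - a * R1 / (L - R1)" using zero \<open>0 < L - R1\<close> by (simp add: field_simps)
      have "N_rate 0 (L - ?q \<tau>) (?q \<tau>) = (a - b) * (?q \<tau> - R1) + (b * (L - R1) + a * R1)"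
        by (simp add: N_rate_on_level a_def b_def algebra_simps)
      also have "\<dots> = a * (exp (a * \<tau>) - 1) * (L * R1 / (L - R1))"
        using \<open>0 < L - R1\<close> by (simp add: q b_eq field_simps)
      finally show ?thesis using pos assms by simp
    qed
    with eventually_at_right_less[of 0] show ?thesis by (rule eventually_mono)
  qed
  ultimately have "\<forall>\<^sub>F \<tau> in at_right 0. 0 < \<tau> \<and> 0 < L - ?q \<tau> \<and> N_rate Dmax (L - ?q \<tau>) (?q \<tau>) < 0 \<and>
      0 < N_rate 0 (L - ?q \<tau>) (?q \<tau>)"
    using eventually_at_right_less by eventually_elim auto
  then show thesis using that eventually_happens'[OF trivial_limit_at_right_real] by blast
qed

end

locale feasible_trajectory = tumour_model +
  fixes D S R :: "real \<Rightarrow> real" and T :: real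
  assumes feasible: "feasible D S R T"
begin

lemma T_nonneg: "0 \<le> T" and solution: "solution_on D S R 0 T"
  and S_0: "S 0 = s0 * K" and R_0: "R 0 = r0 * K" and N_T: "S T + R T = \<Theta>"
  and N_below: "t \<in> {0..<T} \<Longrightarrow> S t + R t < \<Theta>"
  using feasible by (simp_all add: feasible_iff)

lemma N_0_less: "S 0 + R 0 < \<Theta>"
proof -
  have "0 < \<epsilon> * ((s0 + r0) * K)" using \<epsilon>_pos s0_pos r0_pos K_pos by simp
  then show ?thesis by (simp add: S_0 R_0 algebra_simps)
qed

lemma T_pos: "0 < T"
  using N_0_less N_T T_nonneg by (cases "T = 0") auto

lemma S_pos: "t \<in> {0..T} \<Longrightarrow> 0 < S t" and R_pos: "t \<in> {0..T} \<Longrightarrow> 0 < R t"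
  using solution_pos[OF solution] S_0 R_0 s0_pos r0_pos K_pos by simp_all

lemma \<Theta>_less_K: "\<Theta> < K"
proof -
  have "S 0 + R 0 < K" using n0_less_1 K_pos by (simp add: S_0 R_0 flip: distrib_right)
  have "S T + R T < K"
    by (rule solution_below_K[OF solution]) (use S_pos R_pos T_nonneg \<open>S 0 + R 0 < K\<close> in auto)
  then show ?thesis using N_T by simp
qed

lemma N_le_\<Theta>: "t \<in> {0..T} \<Longrightarrow> S t + R t \<le> \<Theta>"
  using N_below N_T by (cases "t = T") (auto intro: less_imp_le)

lemma N_rate_le_nodrug_along:
  assumes "t \<in> {0..T}"
  shows "N_rate (D t) (S t) (R t) \<le> N_rate 0 (S t) (R t)"
proof (rule N_rate_le_nodrug)
  show "0 \<le> D t" using solution assms by (simp add: solution_on_def)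
  show "0 \<le> S t" using S_pos[OF assms] by simp
  show "S t + R t \<le> K" using N_le_\<Theta>[OF assms] \<Theta>_less_K by simp
qed

lemma continuous_on_N_rate: "continuous_on {0..T} (\<lambda>t. N_rate d (S t) (R t))"
  using solution K_pos D0_pos unfolding solution_on_def N_rate_def rhsS_def rhsR_def
  by (auto intro!: continuous_intros)

lemma frequently_nodrug_growth: "\<exists>\<^sub>F t in at_left T. 0 \<le> N_rate 0 (S t) (R t)"
proof (rule ccontr)
  assume "\<not> ?thesis"
  then have "\<forall>\<^sub>F t in at_left T. N_rate 0 (S t) (R t) < 0"
    by (simp add: not_frequently not_le)
  moreover have "\<forall>\<^sub>F t in at_left T. 0 < t"
    using eventually_at_left_real[OF T_pos] by (rule eventually_mono) simp
  ultimately have ev: "\<forall>\<^sub>F t in at_left T. 0 < t \<and> N_rate 0 (S t) (R t) \<le> 0"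
    by eventually_elim auto
  then obtain b where "b < T" and b: "\<And>t. b < t \<Longrightarrow> t < T \<Longrightarrow> 0 < t \<and> N_rate 0 (S t) (R t) \<le> 0"
    by (auto simp: eventually_at_left_field)
  define c where "c = (b + T) / 2"
  have c: "0 < c" "c < T" using b[of c] \<open>b < T\<close> by (auto simp: c_def)
  have "N_rate 0 (S T) (R T) \<le> 0"
    by (rule tendsto_upperbound[OF continuous_on_Icc_at_leftD[OF continuous_on_N_rate T_pos]])
      (use ev in \<open>auto elim: eventually_mono\<close>)
  then have nonpos: "N_rate 0 (S t) (R t) \<le> 0" if "t \<in> {c..T}" for t
    using b[of t] that \<open>b < T\<close> by (cases "t = T") (auto simp: c_def)
  have "((\<lambda>t. N_rate (D t) (S t) (R t)) has_integral (S T + R T) - (S c + R c)) {c..T}"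
    using c by (intro N_has_integral[OF solution]) auto
  then have "(S T + R T) - (S c + R c) \<le> 0"
    by (rule has_integral_le[OF _ has_integral_0])
      (use c N_rate_le_nodrug_along nonpos in \<open>fastforce\<close>)
  then show False using N_below[of c] N_T c by auto
qed

lemma nodrug_growth_at_end: "0 \<le> N_rate 0 (S T) (R T)"
proof (rule ccontr)
  assume "\<not> ?thesis"
  then have "\<forall>\<^sub>F t in at_left T. N_rate 0 (S t) (R t) < 0"
    by (intro order_tendstoD(2)[OF continuous_on_Icc_at_leftD[OF continuous_on_N_rate T_pos]]) simp
  then have "\<forall>\<^sub>F t in at_left T. \<not> 0 \<le> N_rate 0 (S t) (R t)"
    by (rule eventually_mono) simp
  then show False using frequently_nodrug_growth by (simp add: frequently_def)
qed

lemma nondegenerate: "per_capita_R \<Theta> \<noteq> 0 \<or> per_capita_S 0 \<Theta> \<noteq> 0"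
proof (rule ccontr)
  assume "\<not> ?thesis"
  then have equilibrium: "per_capita_R \<Theta> = 0" "per_capita_S 0 \<Theta> = 0" by simp_all
  \<comment> \<open>Then \<open>\<Theta>\<close> is an equilibrium level of \<open>N\<close> without drug, which \<open>N\<close> cannot reach in finite time.\<close>
  define u where "u t = \<Theta> - (S t + R t)" for t
  have nodrug: "N_rate 0 (S t) (R t) = (rS * S t + rR * R t) / K * u t" for t
    unfolding u_def by (rule N_rate_nodrug_near_equilibrium[OF equilibrium])
  have cont_u: "continuous_on {0..T} u"
    using solution unfolding u_def solution_on_def by (auto intro!: continuous_intros)
  have "compact ((\<lambda>t. (rS * S t + rR * R t) / K) ` {0..T})"
    using solution K_pos unfolding solution_on_def
    by (intro compact_continuous_image continuous_intros) auto
  then obtain M where M: "\<forall>t\<in>{0..T}. \<bar>(rS * S t + rR * R t) / K\<bar> \<le> M"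
    by (auto dest!: compact_imp_bounded simp: bounded_real)
  have u_nonneg: "0 \<le> u t" if "t \<in> {0..T}" for t using N_le_\<Theta>[OF that] by (simp add: u_def)
  have "u t = 0" if "t \<in> {0..T}" for t
  proof (rule backward_gronwall_zero[OF cont_u u_nonneg _ _ that])
    show "0 \<le> M" using M T_nonneg by (meson abs_ge_zero atLeastAtMost_iff order.trans order_refl)
    fix t assume t: "t \<in> {0..T}"
    have "((\<lambda>x. N_rate (D x) (S x) (R x)) has_integral u t) {t..T}"
      using N_has_integral[OF solution, of t T] t N_T by (simp add: u_def)
    moreover have "((\<lambda>x. M * u x) has_integral M * integral {t..T} u) {t..T}"
      using t by (intro has_integral_mult_right integrable_integral integrable_continuous_real
          continuous_on_subset[OF cont_u]) auto
    moreover have "N_rate (D x) (S x) (R x) \<le> M * u x" if "x \<in> {t..T}" for x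
    proof -
      have x: "x \<in> {0..T}" using that t by auto
      have "(rS * S x + rR * R x) / K * u x \<le> M * u x"
        using abs_le_D1[OF M[rule_format, OF x]] u_nonneg[OF x] by (rule mult_right_mono)
      then show ?thesis using N_rate_le_nodrug_along[OF x] nodrug[of x] by simp
    qed
    ultimately show "u t \<le> M * integral {t..T} u" by (rule has_integral_le)
  qed
  then have "u 0 = 0" using T_nonneg by simp
  then show False using N_0_less by (simp add: u_def)
qed

lemma max_dose_decline_at_end:
  assumes "rR * R T \<le> (\<gamma> * Dmax / D0 - 1) * rS * S T"
  shows "N_rate Dmax (S T) (R T) < 0"
proof -
  have "N_rate Dmax s r = (1 - n / K) * (rR * r - (\<gamma> * Dmax / D0 - 1) * rS * s) - dS * s - dR * r"
    if "s + r = n" for s r n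
    using that D0_pos K_pos by (simp add: N_rate_eq per_capita_S_def per_capita_R_def field_simps)
  then have "N_rate Dmax (S T) (R T) =
      (1 - \<Theta> / K) * (rR * R T - (\<gamma> * Dmax / D0 - 1) * rS * S T) - dS * S T - dR * R T"
    using N_T by blast
  moreover have "(1 - \<Theta> / K) * (rR * R T - (\<gamma> * Dmax / D0 - 1) * rS * S T) \<le> 0"
    using assms \<Theta>_less_K K_pos by (intro mult_nonneg_nonpos) (auto simp: field_simps)
  moreover have "0 < dS * S T" "0 < dR * R T"
    using S_pos R_pos T_nonneg dS_pos dR_pos by auto
  ultimately show ?thesis by linarith
qed

lemma solution_by_hold_and_ramp:
  assumes t1: "t1 \<in> {0..<T}" and "0 < \<tau>" "0 < \<sigma>"
    and L: "L = S t1 + R t1" and Rh: "Rh = ramp_R L 0 (R t1) \<tau>"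
    and start: "N_rate Dmax (S t1) (R t1) \<le> 0" "0 \<le> N_rate 0 (S t1) (R t1)"
    and hold_end: "0 < L - Rh" "N_rate Dmax (L - Rh) Rh \<le> 0" "0 \<le> N_rate 0 (L - Rh) Rh"
    and ramp: "\<And>u. u \<in> {0..(\<Theta> - L) / \<sigma>} \<Longrightarrow> ramp_admissible L \<sigma> Rh u"
  obtains D' S' R' where "solution_on D' S' R' 0 (t1 + \<tau> + (\<Theta> - L) / \<sigma>)"
    "\<And>t. t \<le> t1 \<Longrightarrow> S' t = S t \<and> R' t = R t"
    "\<And>t. t1 < t \<Longrightarrow> t \<le> t1 + \<tau> \<Longrightarrow> S' t + R' t = L"
    "\<And>t. t1 + \<tau> < t \<Longrightarrow> S' t + R' t = L + \<sigma> * (t - (t1 + \<tau>))"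
proof -
  define t2 where "t2 = t1 + \<tau>"
  define Tp where "Tp = t2 + (\<Theta> - L) / \<sigma>"
  have t1_in: "t1 \<in> {0..T}" using t1 by simp
  have L_minus_R: "L - R t1 = S t1" using L by simp
  have "R t1 < L" using L S_pos[OF t1_in] by simp
  have "L < \<Theta>" using N_below[OF t1] L by simp
  then have "0 < (\<Theta> - L) / \<sigma>" "L < K" using \<open>0 < \<sigma>\<close> \<Theta>_less_K by auto
  have sol_hold: "solution_on (\<lambda>t. ramp_dose L 0 (R t1) (t - t1)) (\<lambda>t. ramp_S L 0 (R t1) (t - t1))
      (\<lambda>t. ramp_R L 0 (R t1) (t - t1)) t1 t2"
    unfolding t2_def
    using \<open>0 < \<tau>\<close> \<open>L < K\<close> R_pos[OF t1_in] start hold_end \<open>R t1 < L\<close>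
    by (intro hold_solution) (auto simp: L_minus_R Rh[symmetric])
  have sol_ramp: "solution_on (\<lambda>t. ramp_dose L \<sigma> Rh (t - t2)) (\<lambda>t. ramp_S L \<sigma> Rh (t - t2))
      (\<lambda>t. ramp_R L \<sigma> Rh (t - t2)) t2 Tp"
  proof (rule ramp_solution)
    fix u assume u: "u \<in> {0..Tp - t2}"
    then have "\<sigma> * u \<le> \<Theta> - L" using \<open>0 < \<sigma>\<close> by (simp add: Tp_def field_simps)
    then show "L + \<sigma> * u < K \<and> ramp_admissible L \<sigma> Rh u"
      using ramp[of u] u \<Theta>_less_K by (simp add: Tp_def)
  qed (use \<open>0 < (\<Theta> - L) / \<sigma>\<close> in \<open>simp add: Tp_def\<close>)
  define D' where "D' t = (if t \<le> t2 then if t \<le> t1 then D t else ramp_dose L 0 (R t1) (t - t1)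
      else ramp_dose L \<sigma> Rh (t - t2))" for t
  define S' where "S' t = (if t \<le> t2 then if t \<le> t1 then S t else ramp_S L 0 (R t1) (t - t1)
      else ramp_S L \<sigma> Rh (t - t2))" for t
  define R' where "R' t = (if t \<le> t2 then if t \<le> t1 then R t else ramp_R L 0 (R t1) (t - t1)
      else ramp_R L \<sigma> Rh (t - t2))" for t
  have "solution_on D' S' R' 0 Tp"
    unfolding D'_def S'_def R'_def
    by (rule solution_on_glue[OF solution_on_glue[OF solution_on_restrict[OF solution] sol_hold] sol_ramp])
      (use t1 \<open>0 < \<tau>\<close> \<open>0 < (\<Theta> - L) / \<sigma>\<close> in \<open>auto simp: t2_def Tp_def L Rh ramp_S_def\<close>)
  show thesis
  proof (rule that)
    show "solution_on D' S' R' 0 (t1 + \<tau> + (\<Theta> - L) / \<sigma>)"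
      using \<open>solution_on D' S' R' 0 Tp\<close> by (simp add: Tp_def t2_def)
  qed (use \<open>0 < \<tau>\<close> in \<open>auto simp: S'_def R'_def ramp_N t2_def\<close>)
qed

lemma feasible_by_hold_and_ramp:
  assumes t1: "t1 \<in> {0..<T}" and "0 < \<tau>" "0 < \<sigma>"
    and L: "L = S t1 + R t1" and Rh: "Rh = ramp_R L 0 (R t1) \<tau>"
    and start: "N_rate Dmax (S t1) (R t1) \<le> 0" "0 \<le> N_rate 0 (S t1) (R t1)"
    and hold_end: "0 < L - Rh" "N_rate Dmax (L - Rh) Rh \<le> 0" "0 \<le> N_rate 0 (L - Rh) Rh"
    and ramp: "\<And>u. u \<in> {0..(\<Theta> - L) / \<sigma>} \<Longrightarrow> ramp_admissible L \<sigma> Rh u"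
  shows "\<exists>D' S' R'. feasible D' S' R' (t1 + \<tau> + (\<Theta> - L) / \<sigma>)"
proof -
  obtain D' S' R' where sol: "solution_on D' S' R' 0 (t1 + \<tau> + (\<Theta> - L) / \<sigma>)"
    and before: "\<And>t. t \<le> t1 \<Longrightarrow> S' t = S t \<and> R' t = R t"
    and hold: "\<And>t. t1 < t \<Longrightarrow> t \<le> t1 + \<tau> \<Longrightarrow> S' t + R' t = L"
    and rise: "\<And>t. t1 + \<tau> < t \<Longrightarrow> S' t + R' t = L + \<sigma> * (t - (t1 + \<tau>))"
    using solution_by_hold_and_ramp[OF assms] by blast
  have "L < \<Theta>" using N_below[OF t1] L by simp
  have below: "S' t + R' t < \<Theta>" if "t \<in> {0..<t1 + \<tau> + (\<Theta> - L) / \<sigma>}" for t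
  proof -
    consider "t \<le> t1" | "t1 < t" "t \<le> t1 + \<tau>" | "t1 + \<tau> < t" by linarith
    then show ?thesis
    proof cases
      case 1
      then show ?thesis using before N_below that t1 by auto
    next
      case 2
      then show ?thesis using hold \<open>L < \<Theta>\<close> by simp
    next
      case 3
      have "\<sigma> * (t - (t1 + \<tau>)) < \<Theta> - L" using that \<open>0 < \<sigma>\<close> by (simp add: field_simps)
      then show ?thesis using 3 rise by simp
    qed
  qed
  have "0 < (\<Theta> - L) / \<sigma>" using \<open>L < \<Theta>\<close> \<open>0 < \<sigma>\<close> by simp
  then have "feasible D' S' R' (t1 + \<tau> + (\<Theta> - L) / \<sigma>)"
    using sol below before[of 0] rise[of "t1 + \<tau> + (\<Theta> - L) / \<sigma>"] t1 \<open>0 < \<tau>\<close> \<open>0 < \<sigma>\<close>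
    by (auto simp: feasible_iff S_0 R_0)
  then show ?thesis by blast
qed

lemma eventually_ramp_admissible:
  assumes "0 < \<sigma>" and Rh: "Rh = ramp_R \<Theta> 0 (R T) \<tau>"
    and at_end: "0 < \<Theta> - Rh" "N_rate Dmax (\<Theta> - Rh) Rh < \<sigma>" "\<sigma> < N_rate 0 (\<Theta> - Rh) Rh"
  shows "\<forall>\<^sub>F t in at_left T. \<forall>u\<in>{0..(\<Theta> - (S t + R t)) / \<sigma>}.
    ramp_admissible (S t + R t) \<sigma> (ramp_R (S t + R t) 0 (R t) \<tau>) u"
proof -
  \<comment> \<open>Rescale the ramp started at time \<open>t\<close> to the parameter interval \<open>[0, 1]\<close>, so that it
    degenerates to the single point \<open>(\<Theta> - Rh, Rh)\<close> at \<open>t = T\<close>.\<close>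
  define L where "L t = S t + R t" for t
  define H where "H t = ramp_R (L t) 0 (R t) \<tau>" for t
  define \<rho> where "\<rho> t = (\<Theta> - L t) / \<sigma>" for t
  define rise_S where "rise_S p = ramp_S (L (fst p)) \<sigma> (H (fst p)) (\<rho> (fst p) * snd p)" for p
  define rise_R where "rise_R p = ramp_R (L (fst p)) \<sigma> (H (fst p)) (\<rho> (fst p) * snd p)" for p
  define h where "h p = min (min (N_rate 0 (rise_S p) (rise_R p) - \<sigma>)
      (\<sigma> - N_rate Dmax (rise_S p) (rise_R p))) (rise_S p)" for p
  have cS: "continuous_on ({0..T} \<times> {0..1::real}) (\<lambda>p. S (fst p))"
    and cR: "continuous_on ({0..T} \<times> {0..1::real}) (\<lambda>p. R (fst p))"
    using solution unfolding solution_on_def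
    by (auto intro: continuous_on_compose2[OF _ continuous_on_fst])
  have "continuous_on ({0..T} \<times> {0..1}) h"
    unfolding h_def rise_S_def rise_R_def ramp_S_def ramp_R_def H_def L_def \<rho>_def N_rate_def
      rhsS_def rhsR_def per_capita_R_def
    using cS cR K_pos D0_pos \<open>0 < \<sigma>\<close> by (intro continuous_intros) auto
  moreover have "0 < h (T, v)" for v
    using at_end N_T by (simp add: h_def rise_S_def rise_R_def L_def H_def \<rho>_def Rh)
  ultimately have "\<forall>\<^sub>F t in at_left T. \<forall>v\<in>{0..1}. 0 < h (t, v)"
    using T_pos by (intro eventually_at_left_pos_on_strip) auto
  then show ?thesis
  proof (rule eventually_mono, intro ballI)
    fix t u assume h_pos: "\<forall>v\<in>{0..1}. 0 < h (t, v)" and u: "u \<in> {0..(\<Theta> - (S t + R t)) / \<sigma>}"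
    define v where "v = (if \<rho> t = 0 then 0 else u / \<rho> t)"
    have "0 \<le> u" "u \<le> \<rho> t" using u by (simp_all add: \<rho>_def L_def)
    then have v: "v \<in> {0..1}" and u_eq: "\<rho> t * v = u" by (auto simp: v_def divide_le_eq_1)
    show "ramp_admissible (S t + R t) \<sigma> (ramp_R (S t + R t) 0 (R t) \<tau>) u"
      using h_pos[rule_format, OF v]
      by (simp add: ramp_admissible_def h_def rise_S_def rise_R_def H_def L_def u_eq)
  qed
qed

lemma feasible_extension_from_hold:
  assumes "0 < \<tau>" and decline: "N_rate Dmax (S T) (R T) < 0"
    and Rh: "Rh = ramp_R \<Theta> 0 (R T) \<tau>"
    and hold_end: "0 < \<Theta> - Rh" "N_rate Dmax (\<Theta> - Rh) Rh < 0" "0 < N_rate 0 (\<Theta> - Rh) Rh"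
  shows "\<exists>D' S' R' T'. feasible D' S' R' T' \<and> T < T'"
proof -
  define \<sigma> where "\<sigma> = N_rate 0 (\<Theta> - Rh) Rh / 2"
  have "0 < \<sigma>" using hold_end by (simp add: \<sigma>_def)
  define L where "L t = S t + R t" for t
  define H where "H t = ramp_R (L t) 0 (R t) \<tau>" for t
  define g where "g t = min (min (- N_rate Dmax (S t) (R t)) (- N_rate Dmax (L t - H t) (H t)))
      (min (L t - H t) (N_rate 0 (L t - H t) (H t)))" for t
  have "continuous_on {0..T} g"
    unfolding g_def H_def L_def ramp_R_def N_rate_def rhsS_def rhsR_def per_capita_R_def
    using solution K_pos D0_pos unfolding solution_on_def by (intro continuous_intros) auto
  moreover have "0 < g T" using decline hold_end N_T by (simp add: g_def L_def H_def Rh)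
  ultimately have "\<forall>\<^sub>F t in at_left T. 0 < g t"
    by (intro order_tendstoD(1)[OF continuous_on_Icc_at_leftD[OF _ T_pos]])
  moreover have "\<forall>\<^sub>F t in at_left T. \<forall>u\<in>{0..(\<Theta> - L t) / \<sigma>}. ramp_admissible (L t) \<sigma> (H t) u"
    unfolding L_def H_def using \<open>0 < \<sigma>\<close> Rh hold_end
    by (intro eventually_ramp_admissible) (auto simp: \<sigma>_def)
  moreover have "\<forall>\<^sub>F t in at_left T. t \<in> {max 0 (T - \<tau>)<..<T}"
    using T_pos \<open>0 < \<tau>\<close> by (intro eventually_at_left_real) simp
  ultimately have "\<forall>\<^sub>F t in at_left T. 0 < g t \<and>
      (\<forall>u\<in>{0..(\<Theta> - L t) / \<sigma>}. ramp_admissible (L t) \<sigma> (H t) u) \<and> t \<in> {max 0 (T - \<tau>)<..<T}"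
    by eventually_elim auto
  with frequently_nodrug_growth have "\<exists>\<^sub>F t in at_left T. 0 \<le> N_rate 0 (S t) (R t) \<and> 0 < g t \<and>
      (\<forall>u\<in>{0..(\<Theta> - L t) / \<sigma>}. ramp_admissible (L t) \<sigma> (H t) u) \<and> t \<in> {max 0 (T - \<tau>)<..<T}"
    by (rule frequently_eventually_frequently)
  then obtain t1 where "0 \<le> N_rate 0 (S t1) (R t1)" "0 < g t1"
    and ramp: "\<forall>u\<in>{0..(\<Theta> - L t1) / \<sigma>}. ramp_admissible (L t1) \<sigma> (H t1) u"
    and t1: "t1 \<in> {max 0 (T - \<tau>)<..<T}"
    by (auto dest: frequently_ex)
  then have "\<exists>D' S' R'. feasible D' S' R' (t1 + \<tau> + (\<Theta> - L t1) / \<sigma>)"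
    by (intro feasible_by_hold_and_ramp[OF _ \<open>0 < \<tau>\<close> \<open>0 < \<sigma>\<close> L_def[of t1] H_def[of t1]])
      (auto simp: g_def)
  moreover have "0 < (\<Theta> - L t1) / \<sigma>"
    using t1 N_below[of t1] \<open>0 < \<sigma>\<close> by (simp add: L_def)
  then have "T < t1 + \<tau> + (\<Theta> - L t1) / \<sigma>" using t1 by simp
  ultimately show ?thesis by blast
qed

lemma feasible_extension:
  assumes "rR * R T \<le> (\<gamma> * Dmax / D0 - 1) * rS * S T"
  shows "\<exists>D' S' R' T'. feasible D' S' R' T' \<and> T < T'"
proof -
  have decline: "N_rate Dmax (S T) (R T) < 0" using max_dose_decline_at_end[OF assms] .
  have "\<Theta> - R T = S T" using N_T by simp
  then obtain \<tau> where "0 < \<tau>" and hold_end: "0 < \<Theta> - ramp_R \<Theta> 0 (R T) \<tau>"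
    "N_rate Dmax (\<Theta> - ramp_R \<Theta> 0 (R T) \<tau>) (ramp_R \<Theta> 0 (R T) \<tau>) < 0"
    "0 < N_rate 0 (\<Theta> - ramp_R \<Theta> 0 (R T) \<tau>) (ramp_R \<Theta> 0 (R T) \<tau>)"
    using hold_duration_exists[of "R T" \<Theta>] R_pos S_pos T_nonneg decline nodrug_growth_at_end nondegenerate
    by auto
  then show ?thesis using feasible_extension_from_hold[OF \<open>0 < \<tau>\<close> decline refl] by blast
qed

end

theorem lemma3p4:
  fixes K rS rR dS dR \<gamma> \<epsilon> D0 Dmin Dmax s0 r0 Tstar :: real
    and Dstar Sstar Rstar :: "real \<Rightarrow> real"
  assumes "K > 0" "rS > 0" "rR > 0" "dS > 0" "dR > 0"
    and "\<gamma> > 1" "0 < \<epsilon>" "\<epsilon> \<le> 0.5" "D0 > 0"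
    and "Dmin = 0" "Dmin \<le> Dmax" "Dmax \<le> D0"
    and "\<gamma> * Dmax / D0 - 1 > 0"
    and "s0 > 0" "r0 > 0" "s0 + r0 < 1"
    and "rhsS K rS dS \<gamma> D0 0 (s0 * K) (r0 * K) > 0"
    and "rhsR K rR dR (s0 * K) (r0 * K) > 0"
    and opt_adm: "admissible K rS rR dS dR \<gamma> \<epsilon> D0 Dmin Dmax s0 r0 Dstar Sstar Rstar Tstar"
    and opt_max: "\<And>D S R T. admissible K rS rR dS dR \<gamma> \<epsilon> D0 Dmin Dmax s0 r0 D S R T \<Longrightarrow> T \<le> Tstar"
    and pwc: "piecewise_constant_on Tstar Dstar"
  shows "\<exists>T0. 0 \<le> T0 \<and> T0 < Tstar \<and>
           (\<forall>t\<in>{T0..Tstar}. rR * Rstar t > (\<gamma> * Dmax / D0 - 1) * rS * Sstar t)"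
proof -
  interpret feasible_trajectory K rS rR dS dR \<gamma> \<epsilon> D0 Dmax s0 r0 Dstar Sstar Rstar Tstar
    using assms by unfold_locales auto
  let ?g = "\<lambda>t. rR * Rstar t - (\<gamma> * Dmax / D0 - 1) * rS * Sstar t"
  show ?thesis
  proof (cases "0 < ?g Tstar")
    case True
    have cont: "continuous_on {0..Tstar} ?g"
      using solution by (auto simp: solution_on_def intro!: continuous_intros)
    obtain T0 where "0 \<le> T0" "T0 < Tstar" "\<And>t. t \<in> {T0..Tstar} \<Longrightarrow> 0 < ?g t"
      using continuous_on_pos_on_left_interval[OF T_pos cont True] by blast
    then show ?thesis by auto
  next
    case False
    then obtain D' S' R' T' where "feasible D' S' R' T'" "Tstar < T'"
      using feasible_extension by fastforce
    then show ?thesis using opt_max \<open>Dmin = 0\<close> by fastforce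
  qed
qed

end
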